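(* Let $p$ be an odd prime, let $m\ge 0$ and $i\ge 0$ be integers, and let $n=(m+i)p-i=i(p-1)+mp\ge 1$. Let $u$ be a partition with $\omega(u)=n$ and $d(u)\le i+1$. Then there exists a reduced partition $u'$ such that $\omega(u')=n$, $d(u')\le i+1$ and $v_p(\tau_u)\ge v_p(\tau_{u'})$.
   Context: A partition is a sequence $u=(u_1,u_2,\dots)$ of nonnegative integers, almost all zero ($u_i$ = number of parts equal to $i$); weight $\omega(u)=\sum_i iu_i$, degree $d(u)=\sum_i u_i$. For a partition $u$ of weight $r\ge1$ with degree $d$, $\gamma_u=\prod_{i\ge1}(i+1)^{u_i}u_i!$ and $\tau_u=(-1)^{d-1}\frac{(r+d-2)!}{\gamma_u}$. $v_p$ is the $p$-adic valuation. A partition $u$ is called reduced if every part $i$ with $u_i\ne 0$ is of the form $p^\alpha-1$ ($\alpha\ge1$), except for at most one part $g$ not of this form, and for such a $g$ one has $u_g=1$. *)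

theory Defs
  imports "HOL-Computational_Algebra.Computational_Algebra"
begin

text \<open>A partition: u i = number of parts equal to i (i \<ge> 1); we require u 0 = 0
  and finite support.\<close>
definition is_partition :: "(nat \<Rightarrow> nat) \<Rightarrow> bool" where
  "is_partition u \<longleftrightarrow> u 0 = 0 \<and> finite {i. u i \<noteq> 0}"

definition weight :: "(nat \<Rightarrow> nat) \<Rightarrow> nat" where
  "weight u = (\<Sum>i\<in>{i. u i \<noteq> 0}. i * u i)"

definition pdegree :: "(nat \<Rightarrow> nat) \<Rightarrow> nat" where
  "pdegree u = (\<Sum>i\<in>{i. u i \<noteq> 0}. u i)"

definition gamma :: "(nat \<Rightarrow> nat) \<Rightarrow> nat" where
  "gamma u = (\<Prod>i\<in>{i. u i \<noteq> 0}. (i + 1) ^ u i * fact (u i))"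

definition tau :: "(nat \<Rightarrow> nat) \<Rightarrow> rat" where
  "tau u = (-1) ^ (pdegree u - 1) * of_nat (fact (weight u + pdegree u - 2)) / of_nat (gamma u)"

text \<open>p-adic valuation of a rational number (value 0 at 0, irrelevant here).\<close>
definition vp_rat :: "nat \<Rightarrow> rat \<Rightarrow> int" where
  "vp_rat p x = (case quotient_of x of (a, b) \<Rightarrow>
      int (multiplicity (int p) a) - int (multiplicity (int p) b))"

definition is_reduced :: "nat \<Rightarrow> (nat \<Rightarrow> nat) \<Rightarrow> bool" where
  "is_reduced p u \<longleftrightarrow>
     (\<exists>G. finite G \<and> card G \<le> 1 \<and>
        (\<forall>i. u i \<noteq> 0 \<longrightarrow> (\<exists>\<alpha>\<ge>1. i = p ^ \<alpha> - 1) \<or> i \<in> G) \<and>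
        (\<forall>g\<in>G. u g = 1 \<and> \<not> (\<exists>\<alpha>\<ge>1. g = p ^ \<alpha> - 1)))"

end

theory Submission
  imports Defs
begin

text \<open>Replace every part \<open>j\<close> with \<open>p | j + 1\<close> by \<open>p\<^sup>v - 1\<close>, where \<open>v = v\<^sub>p(j + 1)\<close>: this
  keeps its contribution \<open>v\<close> to \<open>v\<^sub>p(\<gamma>\<^sub>u)\<close>, and merging parts that become equal only increases
  the terms \<open>v\<^sub>p(u\<^sub>j!)\<close>. Delete all other parts and collect the weight lost in both steps in one
  new part; the result is reduced and has weight \<open>n\<close>.
  If some part was deleted, the new degree \<open>d'\<close> is at most \<open>d\<close>, and Legendre's formula, compared
  digit by digit, shows that \<open>v\<^sub>p((n + d - 2)!)\<close> is at least \<open>v\<^sub>p((n + d' - 2)!)\<close> plus the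
  \<open>v\<^sub>p(u\<^sub>j!)\<close> of the deleted parts. The only critical digit \<open>p\<^sup>a\<close> is one dividing all deleted
  multiplicities, and then \<open>p | n + d' - 1\<close>, so \<open>p\<^sup>a\<close> does not divide \<open>n + d' - 2\<close>.
  If no part was deleted, then \<open>p | n + d\<close>. Hence \<open>d \<le> i\<close>, because \<open>p\<close> does not divide
  \<open>n + i + 1 = (m + i) p + 1\<close>, and the new part raises the degree by one without changing the
  \<open>p\<close>-valuation of the factorial, because \<open>p\<close> does not divide \<open>n + d - 1\<close>.\<close>

lemma multiplicity_int_of_nat: "multiplicity (int p) (int a) = multiplicity p a"
  unfolding multiplicity_def by (simp flip: of_nat_power)

lemma vp_rat_of_int_divide:
  assumes "prime p" "a \<noteq> 0" "b \<noteq> 0"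
  shows "vp_rat p (of_int a / of_int b) = int (multiplicity (int p) a) - int (multiplicity (int p) b)"
proof -
  obtain c e where q: "quotient_of (of_int a / of_int b) = (c, e)"
    by (cases "quotient_of (of_int a / of_int b)") auto
  have e: "e > 0" using quotient_of_denom_pos[OF q] .
  have "(of_int a / of_int b :: rat) = of_int c / of_int e" using quotient_of_div[OF q] .
  then have "(of_int (c * b) :: rat) = of_int (a * e)"
    using assms e by (simp add: field_simps)
  then have ceq: "c * b = a * e" by (simp only: of_int_eq_iff)
  have pe: "prime_elem (int p)" using assms(1) by simp
  have "c \<noteq> 0" using ceq assms e by auto
  have "multiplicity (int p) (c * b) = multiplicity (int p) c + multiplicity (int p) b"
    using \<open>c \<noteq> 0\<close> assms by (intro prime_elem_multiplicity_mult_distrib[OF pe])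
  moreover have "multiplicity (int p) (a * e) = multiplicity (int p) a + multiplicity (int p) e"
    using e assms by (intro prime_elem_multiplicity_mult_distrib[OF pe]) auto
  ultimately have "multiplicity (int p) c + multiplicity (int p) b = multiplicity (int p) a + multiplicity (int p) e"
    using ceq by simp
  then show ?thesis unfolding vp_rat_def q by simp
qed

lemma prime_dvd_Suc_imp_not_dvd:
  assumes "prime (p :: nat)" "p dvd Suc n"
  shows "\<not> p dvd n"
proof
  assume "p dvd n"
  then have "p dvd Suc n - n" using assms(2) by (intro dvd_diff_nat)
  then show False using assms(1) by simp
qed

lemma multiplicity_le_self:
  assumes "prime p" "0 < (m :: nat)"
  shows "multiplicity p m \<le> m"
proof -
  have "2 ^ multiplicity p m \<le> p ^ multiplicity p m"
    using prime_ge_2_nat[OF assms(1)] by (simp add: power_mono)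
  also have "\<dots> \<le> m" using assms by (intro dvd_imp_le multiplicity_dvd)
  finally show ?thesis using less_exp[of "multiplicity p m"] by linarith
qed

lemma multiplicity_eq_card_dvd:
  assumes "prime p" "0 < m" "m \<le> K"
  shows "multiplicity p m = card {a\<in>{1..K}. p ^ a dvd m}"
proof -
  have iff: "p ^ a dvd m \<longleftrightarrow> a \<le> multiplicity p m" for a
    using assms by (intro power_dvd_iff_le_multiplicity) auto
  have "multiplicity p m \<le> K" using multiplicity_le_self[OF assms(1,2)] assms(3) by linarith
  then have "{a\<in>{1..K}. p ^ a dvd m} = {1..multiplicity p m}" by (auto simp: iff)
  then show ?thesis by simp
qed

lemma multiplicity_fact_eq_sum_div:
  assumes "prime p" "N \<le> K"
  shows "multiplicity p (fact N :: nat) = (\<Sum>a\<in>{1..K}. N div p ^ a)"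
  using assms(2)
proof (induction N)
  case (Suc N)
  have pe: "prime_elem p" using assms(1) by simp
  have "multiplicity p (fact (Suc N) :: nat) = multiplicity p (Suc N) + multiplicity p (fact N :: nat)"
    unfolding fact_Suc of_nat_id by (rule prime_elem_multiplicity_mult_distrib[OF pe]) auto
  also have "\<dots> = (\<Sum>a\<in>{1..K}. (if p ^ a dvd Suc N then 1 else 0) + N div p ^ a)"
    using Suc multiplicity_eq_card_dvd[OF assms(1), of "Suc N" K]
    by (simp add: sum.distrib sum.If_cases Int_def)
  also have "\<dots> = (\<Sum>a\<in>{1..K}. Suc N div p ^ a)"
    by (intro sum.cong refl) (auto simp: div_Suc dvd_eq_mod_eq_0)
  finally show ?case .
qed simp

lemma multiplicity_fact_mono: "a \<le> b \<Longrightarrow> multiplicity p (fact a :: nat) \<le> multiplicity p (fact b :: nat)"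
  by (intro dvd_imp_multiplicity_le fact_dvd) auto

lemma multiplicity_fact_sum_le:
  assumes "prime p" "finite B"
  shows "(\<Sum>j\<in>B. multiplicity p (fact (h j) :: nat)) \<le> multiplicity p (fact (\<Sum>j\<in>B. h j) :: nat)"
  using assms(2)
proof (induction B rule: finite_induct)
  case (insert x F)
  have pe: "prime_elem p" using assms(1) by simp
  have "(\<Sum>j\<in>insert x F. multiplicity p (fact (h j) :: nat))
        \<le> multiplicity p (fact (h x) :: nat) + multiplicity p (fact (\<Sum>j\<in>F. h j) :: nat)"
    using insert by simp
  also have "\<dots> = multiplicity p (fact (h x) * fact (\<Sum>j\<in>F. h j) :: nat)"
    by (simp add: prime_elem_multiplicity_mult_distrib[OF pe])
  also have "\<dots> \<le> multiplicity p (fact (h x + (\<Sum>j\<in>F. h j)) :: nat)"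
    by (intro dvd_imp_multiplicity_le fact_fact_dvd_fact) auto
  finally show ?case using insert by simp
qed simp

lemma div_add_le_div_add_pred:
  fixes q t c N :: nat
  assumes "0 < q" "t * q \<le> c" "1 \<le> c" "t * q = c \<Longrightarrow> \<not> q dvd N"
  shows "N div q + t \<le> (N + (c - 1)) div q"
proof (cases "t * q < c")
  case True
  then have "t * q div q \<le> (c - 1) div q" by (intro div_le_mono) linarith
  then have "t \<le> (c - 1) div q" using assms(1) by simp
  then show ?thesis using div_add1_eq[of N "c - 1" q] by linarith
next
  case False
  then have "c = t * q" and ndvd: "\<not> q dvd N" using assms by auto
  then have "N + (c - 1) = (N - 1) + t * q" using assms(3) dvd_0_right[of q] by (cases N) auto
  then have "(N + (c - 1)) div q = (N - 1) div q + t" using assms(1) by simp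
  moreover have "(N - 1) div q = N div q"
    using ndvd div_Suc[of "N - 1" q] dvd_0_right[of q] by (cases N) (auto simp: dvd_eq_mod_eq_0)
  ultimately show ?thesis by simp
qed

lemma multiplicity_fact_add_sum_le:
  fixes p N :: nat and c :: "'a \<Rightarrow> nat"
  assumes p: "prime p" and J: "finite J" and pos: "1 \<le> (\<Sum>j\<in>J. c j)"
    and ndvd: "\<forall>j\<in>J. p dvd c j \<Longrightarrow> \<not> p dvd N"
  shows "multiplicity p (fact N :: nat) + (\<Sum>j\<in>J. multiplicity p (fact (c j) :: nat))
           \<le> multiplicity p (fact (N + (\<Sum>j\<in>J. c j) - 1) :: nat)"
proof -
  define C where "C = (\<Sum>j\<in>J. c j)"
  define K where "K = N + C"
  have c_le: "c j \<le> K" if "j \<in> J" for j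
    using J that unfolding K_def C_def by (simp add: member_le_sum trans_le_add2)
  have digit: "N div p ^ a + (\<Sum>j\<in>J. c j div p ^ a) \<le> (N + (C - 1)) div p ^ a"
    if "1 \<le> a" for a
  proof (rule div_add_le_div_add_pred)
    show "0 < p ^ a" using prime_gt_0_nat[OF p] by simp
    have "(\<Sum>j\<in>J. c j div p ^ a) * p ^ a = (\<Sum>j\<in>J. c j div p ^ a * p ^ a)"
      by (rule sum_distrib_right)
    also have "\<dots> \<le> C" unfolding C_def by (intro sum_mono div_times_less_eq_dividend)
    finally show "(\<Sum>j\<in>J. c j div p ^ a) * p ^ a \<le> C" .
    show "1 \<le> C" using pos by (simp add: C_def)
    assume "(\<Sum>j\<in>J. c j div p ^ a) * p ^ a = C"
    then have "(\<Sum>j\<in>J. c j div p ^ a * p ^ a) = (\<Sum>j\<in>J. c j)"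
      by (simp add: C_def sum_distrib_right)
    then have "\<forall>j\<in>J. c j div p ^ a * p ^ a = c j"
      using sum_mono_inv[of "\<lambda>j. c j div p ^ a * p ^ a" J c] J by (simp add: div_times_less_eq_dividend)
    then have "\<forall>j\<in>J. p ^ a dvd c j" by (metis dvd_triv_right)
    moreover have "p dvd p ^ a" using \<open>1 \<le> a\<close> by (simp add: dvd_power)
    ultimately show "\<not> p ^ a dvd N" using ndvd dvd_trans by blast
  qed
  have "(\<Sum>j\<in>J. multiplicity p (fact (c j) :: nat)) = (\<Sum>j\<in>J. \<Sum>a\<in>{1..K}. c j div p ^ a)"
    by (intro sum.cong refl multiplicity_fact_eq_sum_div[OF p] c_le)
  moreover have "multiplicity p (fact N :: nat) = (\<Sum>a\<in>{1..K}. N div p ^ a)"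
    by (rule multiplicity_fact_eq_sum_div[OF p]) (simp add: K_def)
  ultimately have "multiplicity p (fact N :: nat) + (\<Sum>j\<in>J. multiplicity p (fact (c j) :: nat))
        = (\<Sum>a\<in>{1..K}. N div p ^ a + (\<Sum>j\<in>J. c j div p ^ a))"
    by (simp add: sum.distrib sum.swap[of _ J])
  also have "\<dots> \<le> (\<Sum>a\<in>{1..K}. (N + (C - 1)) div p ^ a)"
    by (intro sum_mono digit) simp
  also have "\<dots> = multiplicity p (fact (N + (C - 1)) :: nat)"
    by (rule multiplicity_fact_eq_sum_div[OF p, symmetric]) (simp add: K_def)
  finally show ?thesis using pos by (simp add: C_def)
qed

lemma part_le_weight:
  assumes "finite {i. u i \<noteq> 0}" "u j \<noteq> 0"
  shows "j \<le> weight u"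
proof -
  have "j \<le> j * u j" using assms(2) by simp
  also have "\<dots> \<le> weight u" unfolding weight_def using assms by (intro member_le_sum) auto
  finally show ?thesis .
qed

lemma
  assumes "finite A" "{i. u i \<noteq> 0} \<subseteq> A"
  shows weight_eq_sum: "weight u = (\<Sum>i\<in>A. i * u i)"
    and pdegree_eq_sum: "pdegree u = (\<Sum>i\<in>A. u i)"
    and gamma_eq_prod: "gamma u = (\<Prod>i\<in>A. (i + 1) ^ u i * fact (u i))"
proof -
  show "weight u = (\<Sum>i\<in>A. i * u i)" unfolding weight_def
    by (rule sum.mono_neutral_left) (use assms in auto)
  show "pdegree u = (\<Sum>i\<in>A. u i)" unfolding pdegree_def
    by (rule sum.mono_neutral_left) (use assms in auto)
  show "gamma u = (\<Prod>i\<in>A. (i + 1) ^ u i * fact (u i))" unfolding gamma_def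
    by (rule prod.mono_neutral_left) (use assms in auto)
qed

lemma vp_rat_tau:
  assumes "prime p" "is_partition u"
  shows "vp_rat p (tau u)
           = int (multiplicity p (fact (weight u + pdegree u - 2) :: nat)) - int (multiplicity p (gamma u))"
proof -
  define N where "N = weight u + pdegree u - 2"
  have "gamma u > 0" using assms(2) unfolding gamma_def is_partition_def by (intro prod_pos) auto
  have "tau u = of_int ((-1) ^ (pdegree u - 1) * int (fact N)) / of_int (int (gamma u))"
    by (simp add: tau_def N_def)
  also have "vp_rat p \<dots> = int (multiplicity (int p) ((-1) ^ (pdegree u - 1) * int (fact N)))
                              - int (multiplicity (int p) (int (gamma u)))"
    using \<open>gamma u > 0\<close> by (intro vp_rat_of_int_divide assms(1)) auto
  also have "multiplicity (int p) ((-1) ^ (pdegree u - 1) * int (fact N)) = multiplicity (int p) (int (fact N))"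
    by (rule multiplicity_times_unit_right) simp
  finally show ?thesis unfolding multiplicity_int_of_nat N_def .
qed

lemma multiplicity_gamma:
  assumes "prime p" "finite A" "{i. u i \<noteq> 0} \<subseteq> A"
  shows "multiplicity p (gamma u)
           = (\<Sum>i\<in>A. u i * multiplicity p (i + 1) + multiplicity p (fact (u i) :: nat))"
proof -
  have pe: "prime_elem p" using assms(1) by simp
  have "multiplicity p (gamma u) = (\<Sum>i\<in>A. multiplicity p ((i + 1) ^ u i * fact (u i) :: nat))"
    unfolding gamma_eq_prod[OF assms(2,3)]
    by (rule prime_elem_multiplicity_prod_distrib[OF pe]) (use assms(2) in auto)
  also have "\<dots> = (\<Sum>i\<in>A. u i * multiplicity p (i + 1) + multiplicity p (fact (u i) :: nat))"
    by (intro sum.cong refl)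
       (simp add: prime_elem_multiplicity_mult_distrib[OF pe] prime_elem_multiplicity_power_distrib[OF pe])
  finally show ?thesis .
qed

definition reduce_part :: "nat \<Rightarrow> nat \<Rightarrow> nat" where
  "reduce_part p j = p ^ multiplicity p (j + 1) - 1"

lemma reduce_part_le: "reduce_part p j \<le> j"
proof -
  have "p ^ multiplicity p (j + 1) \<le> j + 1" by (intro dvd_imp_le multiplicity_dvd) simp
  then show ?thesis by (simp add: reduce_part_def)
qed

lemma multiplicity_Suc_reduce_part:
  assumes "prime p"
  shows "multiplicity p (reduce_part p j + 1) = multiplicity p (j + 1)"
proof -
  have "reduce_part p j + 1 = p ^ multiplicity p (j + 1)"
    using prime_gt_0_nat[OF assms] by (simp add: reduce_part_def)
  then show ?thesis using assms by simp
qed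

lemma reduce_part_eq_power_pred:
  assumes "prime p" "p dvd j + 1"
  shows "\<exists>\<alpha>\<ge>1. reduce_part p j = p ^ \<alpha> - 1"
proof -
  have "1 \<le> multiplicity p (j + 1)"
    using assms power_dvd_iff_le_multiplicity[of "j + 1" p 1] prime_gt_1_nat[OF assms(1)] by simp
  then show ?thesis by (auto simp: reduce_part_def)
qed

lemma reduce_part_pos:
  assumes "prime p" "p dvd j + 1"
  shows "0 < reduce_part p j"
proof -
  obtain \<alpha> where "1 \<le> \<alpha>" "reduce_part p j = p ^ \<alpha> - 1"
    using reduce_part_eq_power_pred[OF assms] by blast
  moreover have "p \<le> p ^ \<alpha>" using \<open>1 \<le> \<alpha>\<close> prime_gt_0_nat[OF assms(1)] by (simp add: self_le_power)
  ultimately show ?thesis using prime_ge_2_nat[OF assms(1)] by simp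
qed

text \<open>All sums below run over \<open>{..weight u}\<close>, which contains every part of \<open>u\<close> and of its
  reduction.\<close>

locale partition_reduction =
  fixes p :: nat and u :: "nat \<Rightarrow> nat"
  assumes prime: "prime p" and partition: "is_partition u"
begin

definition divisible_parts :: "nat set" where
  "divisible_parts = {j\<in>{..weight u}. p dvd j + 1}"

definition other_parts :: "nat set" where
  "other_parts = {j\<in>{..weight u}. \<not> p dvd j + 1}"

definition merged_count :: "nat \<Rightarrow> nat" where
  "merged_count k = (\<Sum>j\<in>{j\<in>divisible_parts. reduce_part p j = k}. u j)"

definition leftover :: nat where
  "leftover = weight u - (\<Sum>j\<in>divisible_parts. reduce_part p j * u j)"

definition reduction :: "nat \<Rightarrow> nat" where
  "reduction k = merged_count k + (if k = leftover \<and> 0 < k then 1 else 0)"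

lemma finite_divisible_parts [simp]: "finite divisible_parts"
  and finite_other_parts [simp]: "finite other_parts"
  by (simp_all add: divisible_parts_def other_parts_def)

lemma support_subset: "{j. u j \<noteq> 0} \<subseteq> {..weight u}"
  using partition part_le_weight by (auto simp: is_partition_def)

lemma sum_parts_split:
  "(\<Sum>j\<le>weight u. h j) = (\<Sum>j\<in>divisible_parts. h j) + (\<Sum>j\<in>other_parts. h j)"
proof -
  have "{..weight u} = divisible_parts \<union> other_parts" "divisible_parts \<inter> other_parts = {}"
    by (auto simp: divisible_parts_def other_parts_def)
  then show ?thesis by (simp add: sum.union_disjoint)
qed

lemma weight_split: "weight u = (\<Sum>j\<in>divisible_parts. j * u j) + (\<Sum>j\<in>other_parts. j * u j)"
  using weight_eq_sum[OF _ support_subset] sum_parts_split[of "\<lambda>j. j * u j"] by simp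

lemma pdegree_split: "pdegree u = (\<Sum>j\<in>divisible_parts. u j) + (\<Sum>j\<in>other_parts. u j)"
  using pdegree_eq_sum[OF _ support_subset] sum_parts_split[of u] by simp

lemma dvd_weight_add_divisible_count:
  assumes "\<forall>j\<in>other_parts. p dvd u j"
  shows "p dvd weight u + (\<Sum>j\<in>divisible_parts. u j)"
proof -
  have "weight u + (\<Sum>j\<in>divisible_parts. u j)
        = (\<Sum>j\<in>divisible_parts. (j + 1) * u j) + (\<Sum>j\<in>other_parts. j * u j)"
    using weight_split by (simp add: sum.distrib)
  moreover have "p dvd (\<Sum>j\<in>divisible_parts. (j + 1) * u j)"
    by (intro dvd_sum dvd_mult2) (simp add: divisible_parts_def)
  moreover have "p dvd (\<Sum>j\<in>other_parts. j * u j)"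
    using assms by (intro dvd_sum dvd_mult) auto
  ultimately show ?thesis by simp
qed

lemma reduce_part_le_weight: "j \<in> divisible_parts \<Longrightarrow> reduce_part p j \<le> weight u"
  using reduce_part_le[of p j] by (auto simp: divisible_parts_def)

lemma sum_group_reduce_part:
  "(\<Sum>k\<le>weight u. \<Sum>j\<in>{j\<in>divisible_parts. reduce_part p j = k}. h j) = (\<Sum>j\<in>divisible_parts. h j)"
  by (rule sum.group) (auto simp: reduce_part_le_weight)

lemma sum_reduce_part_le:
  "(\<Sum>j\<in>divisible_parts. reduce_part p j * u j) \<le> (\<Sum>j\<in>divisible_parts. j * u j)"
  by (intro sum_mono mult_le_mono1 reduce_part_le)

lemma sum_reduce_part_le_weight: "(\<Sum>j\<in>divisible_parts. reduce_part p j * u j) \<le> weight u"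
  using sum_reduce_part_le weight_split by linarith

lemma sum_leftover_indicator:
  "(\<Sum>k\<le>weight u. if k = leftover \<and> 0 < k then h k else 0) = (if 0 < leftover then h leftover else 0)"
proof (cases "0 < leftover")
  case True
  have "(\<Sum>k\<le>weight u. if k = leftover \<and> 0 < k then h k else 0) = (\<Sum>k\<le>weight u. if k = leftover then h k else 0)"
    using True by (intro sum.cong) auto
  also have "\<dots> = h leftover" by (simp add: leftover_def)
  finally show ?thesis using True by simp
next
  case False
  then have "(\<Sum>k\<le>weight u. if k = leftover \<and> 0 < k then h k else 0) = 0"
    by (intro sum.neutral) auto
  then show ?thesis using False by simp
qed

lemma merged_count_nonzero:
  assumes "merged_count k \<noteq> 0"
  shows "\<exists>j\<in>divisible_parts. reduce_part p j = k"
proof (rule ccontr)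
  assume "\<not> ?thesis"
  then have "{j\<in>divisible_parts. reduce_part p j = k} = {}" by auto
  then have "merged_count k = 0" unfolding merged_count_def by (simp only: sum.empty)
  then show False using assms by contradiction
qed

lemma reduction_support: "{k. reduction k \<noteq> 0} \<subseteq> {..weight u}"
proof
  fix k assume "k \<in> {k. reduction k \<noteq> 0}"
  then have "merged_count k \<noteq> 0 \<or> k = leftover" by (auto simp: reduction_def split: if_splits)
  then show "k \<in> {..weight u}"
    using merged_count_nonzero reduce_part_le_weight by (auto simp: leftover_def)
qed

lemma is_partition_reduction: "is_partition reduction"
proof -
  have "merged_count 0 = 0"
  proof (rule ccontr)
    assume "merged_count 0 \<noteq> 0"
    then obtain j where "j \<in> divisible_parts" "reduce_part p j = 0" using merged_count_nonzero by blast
    then show False using reduce_part_pos[OF prime, of j] by (simp add: divisible_parts_def)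
  qed
  then show ?thesis
    using finite_subset[OF reduction_support] by (simp add: is_partition_def reduction_def)
qed

lemma weight_reduction: "weight reduction = weight u"
proof -
  have "weight reduction = (\<Sum>k\<le>weight u. k * reduction k)"
    by (rule weight_eq_sum[OF _ reduction_support]) simp
  also have "\<dots> = (\<Sum>k\<le>weight u. \<Sum>j\<in>{j\<in>divisible_parts. reduce_part p j = k}. reduce_part p j * u j)
                   + (\<Sum>k\<le>weight u. if k = leftover \<and> 0 < k then k else 0)"
  proof -
    have "k * merged_count k = (\<Sum>j\<in>{j\<in>divisible_parts. reduce_part p j = k}. reduce_part p j * u j)" for k
      unfolding merged_count_def sum_distrib_left by (intro sum.cong) auto
    then have "k * reduction k = (\<Sum>j\<in>{j\<in>divisible_parts. reduce_part p j = k}. reduce_part p j * u j)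
                + (if k = leftover \<and> 0 < k then k else 0)" for k
      by (simp add: reduction_def distrib_left)
    then show ?thesis by (simp only: sum.distrib)
  qed
  also have "\<dots> = weight u"
    unfolding sum_group_reduce_part sum_leftover_indicator
    using sum_reduce_part_le_weight by (simp add: leftover_def)
  finally show ?thesis .
qed

lemma pdegree_reduction:
  "pdegree reduction = (\<Sum>j\<in>divisible_parts. u j) + (if 0 < leftover then 1 else 0)"
proof -
  have "pdegree reduction = (\<Sum>k\<le>weight u. reduction k)"
    by (rule pdegree_eq_sum[OF _ reduction_support]) simp
  also have "\<dots> = (\<Sum>k\<le>weight u. merged_count k) + (\<Sum>k\<le>weight u. if k = leftover \<and> 0 < k then 1 else 0)"
    unfolding reduction_def by (rule sum.distrib)
  finally show ?thesis
    unfolding merged_count_def sum_group_reduce_part sum_leftover_indicator .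
qed

lemma leftover_pos:
  assumes "(\<Sum>j\<in>other_parts. u j) \<noteq> 0"
  shows "0 < leftover"
proof -
  obtain j where j: "j \<in> other_parts" "u j \<noteq> 0" using assms by (auto simp: sum_eq_0_iff)
  then have "j \<noteq> 0" using partition by (cases j) (auto simp: is_partition_def)
  then have "1 \<le> j * u j" using j(2) by simp
  also have "\<dots> \<le> (\<Sum>j\<in>other_parts. j * u j)" using j(1) by (intro member_le_sum) auto
  finally show ?thesis using sum_reduce_part_le weight_split by (simp add: leftover_def)
qed

lemma is_reduced_reduction: "is_reduced p reduction"
proof -
  define special where "special k \<longleftrightarrow> (\<exists>\<alpha>\<ge>1. k = p ^ \<alpha> - 1)" for k
  have merged: "special k" if "merged_count k \<noteq> 0" for k
    using merged_count_nonzero[OF that] reduce_part_eq_power_pred[OF prime]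
    unfolding special_def by (auto simp: divisible_parts_def)
  define G where "G = (if 0 < leftover \<and> \<not> special leftover then {leftover} else {})"
  have "reduction k \<noteq> 0 \<Longrightarrow> special k \<or> k \<in> G" for k
    using merged by (auto simp: G_def reduction_def split: if_splits)
  moreover have "reduction g = 1 \<and> \<not> special g" if "g \<in> G" for g
    using that merged by (fastforce simp: G_def reduction_def split: if_splits)
  moreover have "finite G" "card G \<le> 1" by (simp_all add: G_def)
  ultimately have "finite G \<and> card G \<le> 1 \<and> (\<forall>k. reduction k \<noteq> 0 \<longrightarrow> special k \<or> k \<in> G)
        \<and> (\<forall>g\<in>G. reduction g = 1 \<and> \<not> special g)" by blast
  then show ?thesis unfolding is_reduced_def special_def by blast
qed

lemma multiplicity_gamma_split:
  "multiplicity p (gamma u)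
     = (\<Sum>j\<in>divisible_parts. u j * multiplicity p (j + 1) + multiplicity p (fact (u j) :: nat))
       + (\<Sum>j\<in>other_parts. multiplicity p (fact (u j) :: nat))"
proof -
  have "multiplicity p (j + 1) = 0" if "j \<in> other_parts" for j
    using that by (simp add: other_parts_def not_dvd_imp_multiplicity_0)
  then show ?thesis
    unfolding multiplicity_gamma[OF prime finite_atMost support_subset] sum_parts_split by simp
qed

lemma multiplicity_gamma_reduction_ge:
  "(\<Sum>j\<in>divisible_parts. u j * multiplicity p (j + 1) + multiplicity p (fact (u j) :: nat))
     \<le> multiplicity p (gamma reduction)"
proof -
  define V where "V x = multiplicity p (x :: nat)" for x
  have "(\<Sum>j\<in>divisible_parts. u j * V (j + 1) + V (fact (u j)))
        = (\<Sum>k\<le>weight u. \<Sum>j\<in>{j\<in>divisible_parts. reduce_part p j = k}. u j * V (j + 1) + V (fact (u j)))"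
    by (rule sum_group_reduce_part[symmetric])
  also have "\<dots> \<le> (\<Sum>k\<le>weight u. reduction k * V (k + 1) + V (fact (reduction k)))"
  proof (intro sum_mono)
    fix k
    let ?B = "{j\<in>divisible_parts. reduce_part p j = k}"
    have "(\<Sum>j\<in>?B. u j * V (j + 1)) = (\<Sum>j\<in>?B. u j * V (k + 1))"
      using multiplicity_Suc_reduce_part[OF prime] by (intro sum.cong) (auto simp: V_def)
    then have "(\<Sum>j\<in>?B. u j * V (j + 1)) = merged_count k * V (k + 1)"
      by (simp add: merged_count_def sum_distrib_right)
    moreover have "(\<Sum>j\<in>?B. V (fact (u j))) \<le> V (fact (merged_count k))"
      unfolding V_def merged_count_def by (rule multiplicity_fact_sum_le[OF prime]) simp
    moreover have le: "merged_count k \<le> reduction k" by (simp add: reduction_def)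
    then have "merged_count k * V (k + 1) \<le> reduction k * V (k + 1)" by (rule mult_le_mono1)
    moreover have "V (fact (merged_count k)) \<le> V (fact (reduction k))"
      unfolding V_def using le by (rule multiplicity_fact_mono)
    ultimately show "(\<Sum>j\<in>?B. u j * V (j + 1) + V (fact (u j))) \<le> reduction k * V (k + 1) + V (fact (reduction k))"
      unfolding sum.distrib by linarith
  qed
  also have "\<dots> = V (gamma reduction)"
    unfolding V_def by (rule multiplicity_gamma[OF prime finite_atMost reduction_support, symmetric])
  finally show ?thesis unfolding V_def .
qed

lemma multiplicity_fact_reduction_le:
  "multiplicity p (fact (weight u + pdegree reduction - 2) :: nat)
     + (\<Sum>j\<in>other_parts. multiplicity p (fact (u j) :: nat))
     \<le> multiplicity p (fact (weight u + pdegree u - 2) :: nat)"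
proof (cases "(\<Sum>j\<in>other_parts. u j) = 0")
  case True
  then have zero: "\<forall>j\<in>other_parts. u j = 0" by simp
  then have dvd: "p dvd weight u + pdegree u"
    using dvd_weight_add_divisible_count pdegree_split by simp
  show ?thesis
  proof (cases "0 < leftover")
    case False
    then show ?thesis using zero pdegree_reduction pdegree_split by simp
  next
    case True
    define N where "N = weight u + pdegree u - 2"
    have "0 < weight u" using True by (simp add: leftover_def)
    then have "p \<le> weight u + pdegree u" using dvd by (intro dvd_imp_le) auto
    then have N: "weight u + pdegree u = Suc (Suc N)"
      using prime_ge_2_nat[OF prime] by (simp add: N_def)
    then have "\<not> p dvd Suc N" using dvd prime_dvd_Suc_imp_not_dvd[OF prime] by simp
    have "multiplicity p (fact (Suc N) :: nat) = multiplicity p (Suc N) + multiplicity p (fact N :: nat)"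
      unfolding fact_Suc of_nat_id by (rule prime_elem_multiplicity_mult_distrib) (use prime in auto)
    then have "multiplicity p (fact (Suc N) :: nat) = multiplicity p (fact N :: nat)"
      using \<open>\<not> p dvd Suc N\<close> by (simp add: not_dvd_imp_multiplicity_0)
    moreover have "weight u + pdegree reduction - 2 = Suc N"
      using N True zero pdegree_reduction pdegree_split by simp
    ultimately show ?thesis using zero by (simp add: N_def)
  qed
next
  case False
  define s where "s = (\<Sum>j\<in>divisible_parts. u j)"
  have pos: "1 \<le> (\<Sum>j\<in>other_parts. u j)" using False by linarith
  have "0 < leftover" using leftover_pos[OF False] .
  then have "0 < weight u" by (simp add: leftover_def)
  have "\<not> p dvd weight u + s - 1" if "\<forall>j\<in>other_parts. p dvd u j"
    using dvd_weight_add_divisible_count[OF that] prime_dvd_Suc_imp_not_dvd[OF prime, of "weight u + s - 1"]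
      \<open>0 < weight u\<close> by (simp add: s_def)
  then have "multiplicity p (fact (weight u + s - 1) :: nat)
             + (\<Sum>j\<in>other_parts. multiplicity p (fact (u j) :: nat))
             \<le> multiplicity p (fact (weight u + s - 1 + (\<Sum>j\<in>other_parts. u j) - 1) :: nat)"
    by (rule multiplicity_fact_add_sum_le[OF prime finite_other_parts pos])
  moreover have "weight u + pdegree reduction - 2 = weight u + s - 1"
    using pdegree_reduction \<open>0 < leftover\<close> by (simp add: s_def)
  moreover have "weight u + s - 1 + (\<Sum>j\<in>other_parts. u j) - 1 = weight u + pdegree u - 2"
    using pdegree_split False \<open>0 < weight u\<close> by (simp add: s_def)
  ultimately show ?thesis by simp
qed

lemma vp_tau_reduction_le: "vp_rat p (tau reduction) \<le> vp_rat p (tau u)"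
proof -
  have "multiplicity p (fact (weight u + pdegree reduction - 2) :: nat) + multiplicity p (gamma u)
        \<le> multiplicity p (fact (weight u + pdegree u - 2) :: nat) + multiplicity p (gamma reduction)"
    using multiplicity_gamma_split multiplicity_gamma_reduction_ge multiplicity_fact_reduction_le
    by linarith
  then show ?thesis
    unfolding vp_rat_tau[OF prime partition] vp_rat_tau[OF prime is_partition_reduction] weight_reduction
    by linarith
qed

lemma pdegree_reduction_le_Suc: "pdegree reduction \<le> pdegree u + 1"
  using pdegree_reduction pdegree_split by simp

lemma pdegree_reduction_le_if_not_dvd:
  assumes "\<not> p dvd weight u + pdegree u"
  shows "pdegree reduction \<le> pdegree u"
proof -
  have "(\<Sum>j\<in>other_parts. u j) \<noteq> 0"
  proof
    assume "(\<Sum>j\<in>other_parts. u j) = 0"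
    then have "p dvd weight u + (\<Sum>j\<in>divisible_parts. u j)"
      by (intro dvd_weight_add_divisible_count) simp
    then show False using assms pdegree_split \<open>(\<Sum>j\<in>other_parts. u j) = 0\<close> by simp
  qed
  then have "pdegree reduction = (\<Sum>j\<in>divisible_parts. u j) + 1"
    using leftover_pos pdegree_reduction by simp
  then show ?thesis using pdegree_split \<open>(\<Sum>j\<in>other_parts. u j) \<noteq> 0\<close> by linarith
qed

end

theorem lemma3p2:
  fixes p m i n :: nat and u :: "nat \<Rightarrow> nat"
  assumes "prime p" and "odd p"
    and "n = (m + i) * p - i" and "n \<ge> 1"
    and "is_partition u" and "weight u = n" and "pdegree u \<le> i + 1"
  shows "\<exists>u'. is_partition u' \<and> is_reduced p u' \<and> weight u' = n \<and> pdegree u' \<le> i + 1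
           \<and> vp_rat p (tau u) \<ge> vp_rat p (tau u')"
proof -
  interpret partition_reduction p u using assms(1,5) by unfold_locales
  have "pdegree reduction \<le> i + 1"
  proof (cases "p dvd n + pdegree u")
    case True
    have "n + i = (m + i) * p" using assms(3,4) by arith
    then have "pdegree u \<noteq> i + 1"
      using True prime_dvd_Suc_imp_not_dvd[OF assms(1), of "(m + i) * p"] by auto
    then show ?thesis using assms(7) pdegree_reduction_le_Suc by linarith
  next
    case False
    then show ?thesis using pdegree_reduction_le_if_not_dvd assms(6,7) by simp
  qed
  then show ?thesis
    using is_partition_reduction is_reduced_reduction weight_reduction vp_tau_reduction_le assms(6)
    by auto
qed

end
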